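(* Let $\mathcal A_+,\mathcal A_-\subseteq\mathbb R^n$ be disjoint finite sets such that $\mathcal A=\mathcal A_+\cup\mathcal A_-$ is full dimensional and $(\mathcal A_+,\mathcal A_-)$ is nonseparable, and fix $D\in\mathcal F_n(\mathcal A_+)$ with $\mathcal A_-\subseteq D$; let $r=\#\Lambda(\mathcal A_+,D)$. Let $f\in\mathcal S(\mathcal A_+,\mathcal A_-)$ have nonsigned coefficients $c\in\mathbb R^{\mathcal A}_{>0}$ with $\mathbb 1\in\operatorname{Sing}_{>0}(f)$. Then $\mathcal Z(\Lambda(\mathcal A_+,D),c)\cap\mathbb R^r_{\ge0}\neq\varnothing$.
   Context: A signomial with signed support $(\mathcal A_+,\mathcal A_-)$ is $f(x)=\sum_{a\in\mathcal A_+}c_ax^a-\sum_{b\in\mathcal A_-}c_bx^b$ on $\mathbb R^n_{>0}$ with all $c_a,c_b>0$; $\mathcal S(\mathcal A_+,\mathcal A_-)$ is the set of these. Full dimensional: $\dim\operatorname{conv}(\mathcal A)=n$. $\operatorname{Sing}_{>0}(f)$ is the set of $x\in\mathbb R^n_{>0}$ with $f(x)=x_1\partial_{x_1}f(x)=\dots=x_n\partial_{x_n}f(x)=0$; $\mathbb 1=(1,\dots,1)$. $\mathcal F(\mathcal A_+)$ is the common refinement of all regular polyhedral subdivisions of $\mathcal A_+$, $\mathcal F_n(\mathcal A_+)$ its $n$-dimensional cells; $(\mathcal A_+,\mathcal A_-)$ is nonseparable if $\mathcal A_-\subseteq\operatorname{relint}\operatorname{conv}(\mathcal A_+)$ and some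 $D\in\mathcal F_n(\mathcal A_+)$ contains $\mathcal A_-$. $\Lambda(\mathcal A_+,D)=\{\Delta_1,\dots,\Delta_r\}$ is the set of $n$-simplices with vertices in $\mathcal A_+$ with $\operatorname{relint}(D)\subseteq\operatorname{relint}(\Delta)$. With $\lambda^b_{a,k}$ the barycentric coordinates of $b\in\mathcal A_-$ w.r.t. the vertices of $\Delta_k$, $\mathcal Z(\Lambda,c)\subseteq\mathbb R^r$ is the solution set of $c_a=\sum_{k:\,a\in\operatorname{vertices}(\Delta_k)}\delta_k\big(\sum_{b\in\mathcal A_-}\lambda^b_{a,k}c_b\big)$, $a\in\mathcal A_+$, in the unknowns $\delta_1,\dots,\delta_r$. *)

theory Defs
  imports "HOL-Analysis.Analysis"
begin

definition mono_pow :: "real^'n \<Rightarrow> real^'n \<Rightarrow> real" where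
  "mono_pow x a = (\<Prod>i\<in>UNIV. (x$i) powr (a$i))"

definition signomial :: "(real^'n) set \<Rightarrow> (real^'n) set \<Rightarrow> (real^'n \<Rightarrow> real) \<Rightarrow> real^'n \<Rightarrow> real" where
  "signomial Ap Am c x = (\<Sum>a\<in>Ap. c a * mono_pow x a) - (\<Sum>b\<in>Am. c b * mono_pow x b)"

definition Sing_pos :: "(real^'n \<Rightarrow> real) \<Rightarrow> (real^'n) set" where
  "Sing_pos f = {x. (\<forall>i. x$i > 0) \<and> f x = 0 \<and>
     (\<forall>i. \<exists>d. ((\<lambda>t. f (x + t *\<^sub>R axis i 1)) has_real_derivative d) (at 0) \<and> x$i * d = 0)}"

text \<open>Cells of the regular polyhedral subdivision of A induced by the height function h:
  projections of the lower faces, i.e. convex hulls of the sets of minimisers of h a + w . a.\<close>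
definition reg_cells :: "(real^'n) set \<Rightarrow> (real^'n \<Rightarrow> real) \<Rightarrow> (real^'n) set set" where
  "reg_cells A h = {convex hull {a\<in>A. \<forall>a'\<in>A. h a + w \<bullet> a \<le> h a' + w \<bullet> a'} | w. True}"

text \<open>Cells of the common refinement F(A) of all regular subdivisions of A:
  nonempty intersections of one cell chosen from each regular subdivision.\<close>
definition common_refinement :: "(real^'n) set \<Rightarrow> (real^'n) set set" where
  "common_refinement A = {C. C \<noteq> {} \<and>
     (\<exists>\<sigma>. (\<forall>h. \<sigma> h \<in> reg_cells A h) \<and> C = (\<Inter>h. \<sigma> h))}"

definition F_n :: "(real^'n) set \<Rightarrow> (real^'n) set set" where
  "F_n A = {C \<in> common_refinement A. aff_dim C = int CARD('n)}"

definition nonseparable :: "(real^'n) set \<Rightarrow> (real^'n) set \<Rightarrow> bool" where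
  "nonseparable Ap Am \<longleftrightarrow> Am \<subseteq> rel_interior (convex hull Ap) \<and> (\<exists>D\<in>F_n Ap. Am \<subseteq> D)"

text \<open>Lambda(A,D): n-simplices with vertices in A (represented by their vertex sets)
  whose relative interior contains that of D.\<close>
definition Lambda :: "(real^'n) set \<Rightarrow> (real^'n) set \<Rightarrow> (real^'n) set set" where
  "Lambda A D = {V. V \<subseteq> A \<and> card V = CARD('n) + 1 \<and> \<not> affine_dependent V \<and>
      rel_interior D \<subseteq> rel_interior (convex hull V)}"

definition bary :: "(real^'n) set \<Rightarrow> real^'n \<Rightarrow> real^'n \<Rightarrow> real" where
  "bary V b a = (THE \<mu>. (\<forall>v. v \<notin> V \<longrightarrow> \<mu> v = 0) \<and> sum \<mu> V = 1 \<and>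
      (\<Sum>v\<in>V. \<mu> v *\<^sub>R v) = b) a"

text \<open>Z(Lambda,c), with R^r identified with R^Lambda (delta indexed by the simplices).\<close>
definition Zset :: "(real^'n) set \<Rightarrow> (real^'n) set \<Rightarrow> (real^'n) set set \<Rightarrow> (real^'n \<Rightarrow> real)
    \<Rightarrow> ((real^'n) set \<Rightarrow> real) set" where
  "Zset Ap Am L c = {\<delta>. (\<forall>V. V \<notin> L \<longrightarrow> \<delta> V = 0) \<and>
     (\<forall>a\<in>Ap. c a = (\<Sum>V\<in>{V\<in>L. a \<in> V}. \<delta> V * (\<Sum>b\<in>Am. bary V b a * c b)))}"

end

theory Submission
  imports Defs
begin

(* At the singular point 1 the equations f = 0 and x_i d_i f = 0 say that the coefficients
   c_a (a in A+) and c_b (b in A-) have the same total mass and the same first moments.  Since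
   barycentric coordinates reproduce mass and first moments, the same holds for the vector
   mu_Delta = (sum_b lambda^b_(a,Delta) c_b)_a of every simplex Delta, and Z(Lambda,c) meets the
   nonnegative orthant as soon as c restricted to A+ is a nonnegative combination of these.
   If it is not, Farkas' lemma yields a height function y on A+ with <y, mu_Delta> >= 0 for all
   Delta in Lambda and <y, c> < 0.  As D is a full-dimensional cell of the common refinement, the
   regular subdivision induced by y has a cell containing D, and a generic point of D singles out
   a simplex Delta in Lambda(A+,D) on that lower face: an affine function l agrees with y on
   Delta and lies below y on A+.  Then <y, mu_Delta> = <l, mu_Delta> = sum_b c_b l(b) = <l, c>
   <= <y, c>, a contradiction. *)

section \<open>Farkas' lemma\<close>

definition dot_on :: "'a set \<Rightarrow> ('a \<Rightarrow> real) \<Rightarrow> ('a \<Rightarrow> real) \<Rightarrow> real" where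
  "dot_on A u v = (\<Sum>a\<in>A. u a * v a)"

lemma dot_on_diff_scaled_left:
  "dot_on A (\<lambda>a. u a - k * v a) w = dot_on A u w - k * dot_on A v w"
  unfolding dot_on_def by (simp add: algebra_simps sum_subtractf sum_distrib_left)

lemma dot_on_diff_scaled_right:
  "dot_on A u (\<lambda>a. v a - k * w a) = dot_on A u v - k * dot_on A u w"
  unfolding dot_on_def by (simp add: algebra_simps sum_subtractf sum_distrib_left)

definition in_finite_cone :: "'a set \<Rightarrow> 'i set \<Rightarrow> ('i \<Rightarrow> 'a \<Rightarrow> real) \<Rightarrow> ('a \<Rightarrow> real) \<Rightarrow> bool" where
  "in_finite_cone A I g b \<longleftrightarrow> (\<exists>l. (\<forall>i\<in>I. 0 \<le> l i) \<and> (\<forall>a\<in>A. b a = (\<Sum>i\<in>I. l i * g i a)))"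

lemma in_finite_cone_mono:
  assumes "in_finite_cone A I g b" "I \<subseteq> J" "finite J"
  shows "in_finite_cone A J g b"
proof -
  obtain l where l: "\<forall>i\<in>I. 0 \<le> l i" "\<forall>a\<in>A. b a = (\<Sum>i\<in>I. l i * g i a)"
    using assms(1) unfolding in_finite_cone_def by blast
  define l' where "l' i = (if i \<in> I then l i else 0)" for i
  have "(\<Sum>i\<in>I. l i * g i a) = (\<Sum>i\<in>J. l' i * g i a)" for a
    unfolding l'_def by (rule sum.mono_neutral_cong_left) (use assms(2,3) in auto)
  then show ?thesis
    unfolding in_finite_cone_def using l by (intro exI[of _ l']) (auto simp: l'_def)
qed

lemma in_finite_cone_insert_of_projection:
  assumes "finite I" "j \<notin> I" and yj: "dot_on A y (g j) < 0"
    and y: "\<forall>i\<in>I. 0 \<le> dot_on A y (g i)" "dot_on A y b < 0"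
    and "in_finite_cone A I
      (\<lambda>i a. g i a - dot_on A y (g i) / dot_on A y (g j) * g j a)
      (\<lambda>a. b a - dot_on A y b / dot_on A y (g j) * g j a)"
  shows "in_finite_cone A (insert j I) g b"
proof -
  define t where "t = dot_on A y (g j)"
  obtain l where l: "\<forall>i\<in>I. 0 \<le> l i"
      "\<forall>a\<in>A. b a - dot_on A y b / t * g j a = (\<Sum>i\<in>I. l i * (g i a - dot_on A y (g i) / t * g j a))"
    using assms(6) unfolding in_finite_cone_def t_def by blast
  define lj where "lj = (dot_on A y b - (\<Sum>i\<in>I. l i * dot_on A y (g i))) / t"
  have "0 \<le> (\<Sum>i\<in>I. l i * dot_on A y (g i))"
    using l(1) y(1) by (auto intro: sum_nonneg)
  then have lj: "0 \<le> lj"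
    unfolding lj_def using yj y(2) t_def by (simp add: divide_nonpos_neg)
  have "b a = lj * g j a + (\<Sum>i\<in>I. l i * g i a)" if "a \<in> A" for a
  proof -
    have "b a - dot_on A y b / t * g j a
        = (\<Sum>i\<in>I. l i * g i a) - (\<Sum>i\<in>I. l i * dot_on A y (g i)) / t * g j a"
      using l(2) that
      by (simp add: algebra_simps sum_subtractf sum_distrib_left sum_divide_distrib sum_distrib_right)
    then show ?thesis
      unfolding lj_def using yj t_def by (simp add: field_simps)
  qed
  moreover have "(\<Sum>i\<in>I. (l(j := lj)) i * g i a) = (\<Sum>i\<in>I. l i * g i a)" for a
    using assms(2) by (intro sum.cong) auto
  ultimately show ?thesis
    unfolding in_finite_cone_def using l(1) lj assms(1,2)
    by (intro exI[of _ "l(j := lj)"]) auto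
qed

theorem farkas_lemma:
  assumes "finite A" "finite I" "\<not> in_finite_cone A I g b"
  shows "\<exists>y. (\<forall>i\<in>I. 0 \<le> dot_on A y (g i)) \<and> dot_on A y b < 0"
  using assms(2,3)
proof (induction I arbitrary: g b rule: finite_induct)
  case empty
  then obtain a where "a \<in> A" "b a \<noteq> 0"
    unfolding in_finite_cone_def by auto
  then have "0 < dot_on A b b"
    unfolding dot_on_def
    by (intro sum_pos2[OF assms(1)]) (auto simp: zero_less_mult_iff linorder_neq_iff)
  then have "dot_on A (\<lambda>a. - b a) b < 0"
    unfolding dot_on_def by (simp add: sum_negf)
  then show ?case by blast
next
  case (insert j I)
  then have "\<not> in_finite_cone A I g b"
    using in_finite_cone_mono[of A I g b "insert j I"] by blast
  then obtain y where y: "\<forall>i\<in>I. 0 \<le> dot_on A y (g i)" "dot_on A y b < 0"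
    using insert.IH by blast
  define t where "t = dot_on A y (g j)"
  show ?case
  proof (cases "0 \<le> t")
    case True
    then show ?thesis using y unfolding t_def by auto
  next
    case False
    define g' where "g' i = (\<lambda>a. g i a - dot_on A y (g i) / t * g j a)" for i
    define b' where "b' = (\<lambda>a. b a - dot_on A y b / t * g j a)"
    have "\<not> in_finite_cone A I g' b'"
      using in_finite_cone_insert_of_projection[of I j A y g b] insert False y
      unfolding g'_def b'_def t_def by auto
    then obtain y' where y': "\<forall>i\<in>I. 0 \<le> dot_on A y' (g' i)" "dot_on A y' b' < 0"
      using insert.IH by blast
    \<comment> \<open>Correct \<open>y'\<close> along \<open>y\<close> so that it vanishes on \<open>g j\<close>; on the other generators and on
      \<open>b\<close> it then takes the values of \<open>y'\<close> on their projections \<open>g' i\<close> and \<open>b'\<close>.\<close>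
    define yh where "yh = (\<lambda>a. y' a - dot_on A y' (g j) / t * y a)"
    have "dot_on A yh (g i) = dot_on A y' (g' i)" for i
      unfolding yh_def g'_def dot_on_diff_scaled_left dot_on_diff_scaled_right by simp
    moreover have "dot_on A yh (g j) = 0"
      unfolding yh_def dot_on_diff_scaled_left t_def[symmetric] using False by simp
    moreover have "dot_on A yh b = dot_on A y' b'"
      unfolding yh_def b'_def dot_on_diff_scaled_left dot_on_diff_scaled_right by simp
    ultimately show ?thesis
      using y' by (intro exI[of _ yh]) auto
  qed
qed

section \<open>Mass and first moments at the singular point\<close>

lemma mono_pow_one [simp]: "mono_pow 1 a = 1"
  unfolding mono_pow_def by simp

lemma mono_pow_one_plus_axis: "mono_pow (1 + t *\<^sub>R axis i 1) a = (1 + t) powr (a $ i)"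
proof -
  have "mono_pow (1 + t *\<^sub>R axis i 1) a = (\<Prod>j\<in>UNIV. if j = i then (1 + t) powr (a $ i) else 1)"
    unfolding mono_pow_def by (rule prod.cong) (auto simp: axis_def)
  then show ?thesis by simp
qed

lemma has_real_derivative_one_plus_powr: "((\<lambda>t. (1 + t) powr r) has_real_derivative r) (at 0)"
proof -
  have "((\<lambda>t. (1 + t) powr r) has_real_derivative r * (1 + 0) powr (r - 1) * 1) (at 0)"
    by (rule DERIV_chain2[OF has_real_derivative_powr]) (auto intro!: derivative_eq_intros)
  then show ?thesis by simp
qed

lemma one_in_Sing_pos_signomial_sum_eq:
  fixes Ap Am :: "(real^'n) set"
  assumes "1 \<in> Sing_pos (signomial Ap Am c)"
  shows "sum c Ap = sum c Am"
  using assms unfolding Sing_pos_def signomial_def by simp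

lemma one_in_Sing_pos_signomial_moment_eq:
  fixes Ap Am :: "(real^'n) set"
  assumes "1 \<in> Sing_pos (signomial Ap Am c)"
  shows "(\<Sum>a\<in>Ap. c a *\<^sub>R a) = (\<Sum>b\<in>Am. c b *\<^sub>R b)"
proof (subst vec_eq_iff, intro allI)
  fix i
  from assms obtain d where
    d: "((\<lambda>t. signomial Ap Am c (1 + t *\<^sub>R axis i 1)) has_real_derivative d) (at 0)"
      "(1::real^'n) $ i * d = 0"
    unfolding Sing_pos_def by blast
  have eq: "(\<lambda>t. signomial Ap Am c (1 + t *\<^sub>R axis i 1))
      = (\<lambda>t. (\<Sum>a\<in>Ap. c a * (1 + t) powr (a $ i)) - (\<Sum>b\<in>Am. c b * (1 + t) powr (b $ i)))"
    unfolding signomial_def by (simp add: mono_pow_one_plus_axis)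
  have "((\<lambda>t. (\<Sum>a\<in>Ap. c a * (1 + t) powr (a $ i)) - (\<Sum>b\<in>Am. c b * (1 + t) powr (b $ i)))
      has_real_derivative (\<Sum>a\<in>Ap. c a * a $ i) - (\<Sum>b\<in>Am. c b * b $ i)) (at 0)"
    by (rule DERIV_diff; rule DERIV_sum; rule DERIV_cmult; rule has_real_derivative_one_plus_powr)
  then have "d = (\<Sum>a\<in>Ap. c a * a $ i) - (\<Sum>b\<in>Am. c b * b $ i)"
    by (rule DERIV_unique[OF d(1)[unfolded eq]])
  with d(2) show "(\<Sum>a\<in>Ap. c a *\<^sub>R a) $ i = (\<Sum>b\<in>Am. c b *\<^sub>R b) $ i" by simp
qed

lemma sum_mult_affine:
  fixes w :: "'a::real_inner"
  shows "(\<Sum>a\<in>A. c a * (m - w \<bullet> a)) = m * sum c A - w \<bullet> (\<Sum>a\<in>A. c a *\<^sub>R a)"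
  by (simp add: algebra_simps sum_subtractf sum_distrib_left inner_sum_right)

section \<open>Barycentric coordinates\<close>

lemma bary_affine_coordinates:
  fixes V :: "(real^'n) set"
  assumes "finite V" "\<not> affine_dependent V" "b \<in> affine hull V"
  shows bary_outside: "\<And>v. v \<notin> V \<Longrightarrow> bary V b v = 0"
    and sum_bary: "sum (bary V b) V = 1"
    and sum_bary_scaleR: "(\<Sum>v\<in>V. bary V b v *\<^sub>R v) = b"
proof -
  let ?P = "\<lambda>\<mu>. (\<forall>v. v \<notin> V \<longrightarrow> \<mu> v = 0) \<and> sum \<mu> V = 1 \<and> (\<Sum>v\<in>V. \<mu> v *\<^sub>R v) = b"
  obtain u where u: "sum u V = 1" "(\<Sum>v\<in>V. u v *\<^sub>R v) = b"
    using assms(3) affine_hull_finite[OF assms(1)] by auto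
  define \<mu> where "\<mu> v = (if v \<in> V then u v else 0)" for v
  have P\<mu>: "?P \<mu>"
    using u unfolding \<mu>_def by (auto intro!: sum.cong)
  have uniq: "\<mu>' = \<mu>" if "?P \<mu>'" for \<mu>'
  proof
    fix v
    define U where "U v = \<mu>' v - \<mu> v" for v
    have "sum U V = 0" "(\<Sum>v\<in>V. U v *\<^sub>R v) = 0"
      using that P\<mu> unfolding U_def by (simp_all add: sum_subtractf scaleR_left_diff_distrib)
    then have "\<forall>v\<in>V. U v = 0"
      using assms(2) affine_dependent_explicit_finite[OF assms(1)] by blast
    then show "\<mu>' v = \<mu> v"
      using that P\<mu> unfolding U_def by (cases "v \<in> V") auto
  qed
  have "bary V b = (THE \<mu>. ?P \<mu>)"
    unfolding bary_def[abs_def] by simp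
  also have "\<dots> = \<mu>"
    using P\<mu> uniq by (rule the_equality)
  finally have "bary V b = \<mu>" .
  with P\<mu> show "\<And>v. v \<notin> V \<Longrightarrow> bary V b v = 0" "sum (bary V b) V = 1"
      "(\<Sum>v\<in>V. bary V b v *\<^sub>R v) = b"
    by auto
qed

lemma Lambda_memberD:
  assumes "V \<in> Lambda A D"
  shows "V \<subseteq> A" "finite V" "\<not> affine_dependent V" "affine hull V = UNIV"
proof -
  show V: "V \<subseteq> A" "\<not> affine_dependent V"
    using assms unfolding Lambda_def by auto
  have card: "card V = CARD('a) + 1"
    using assms unfolding Lambda_def by auto
  then show "finite V"
    by (intro card_ge_0_finite) simp
  then have "aff_dim V = CARD('a)"
    using V card affine_independent_iff_card[of V] by simp
  then show "affine hull V = UNIV"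
    using aff_dim_eq_full[of V] by simp
qed

lemma finite_Lambda: "finite A \<Longrightarrow> finite (Lambda A D)"
  unfolding Lambda_def by (rule finite_subset[of _ "Pow A"]) auto

text \<open>The coefficient of \<open>\<delta>\<^sub>V\<close> in the equation of \<open>Zset\<close> indexed by \<open>a\<close>.\<close>

definition bary_coeff :: "(real^'n) set \<Rightarrow> (real^'n) set \<Rightarrow> (real^'n \<Rightarrow> real) \<Rightarrow> real^'n \<Rightarrow> real" where
  "bary_coeff V B c a = (\<Sum>b\<in>B. bary V b a * c b)"

context
  fixes V B :: "(real^'n) set"
  assumes V: "finite V" "\<not> affine_dependent V" and B: "B \<subseteq> affine hull V"
begin

lemma bary_coeff_outside: "a \<notin> V \<Longrightarrow> bary_coeff V B c a = 0"
  unfolding bary_coeff_def by (intro sum.neutral) (use bary_outside[OF V] B in auto)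

lemma sum_bary_coeff: "(\<Sum>a\<in>V. bary_coeff V B c a) = sum c B"
proof -
  have "(\<Sum>a\<in>V. bary_coeff V B c a) = (\<Sum>b\<in>B. sum (bary V b) V * c b)"
    unfolding bary_coeff_def by (simp add: sum.swap[of _ V] sum_distrib_right)
  also have "\<dots> = sum c B"
    by (intro sum.cong refl) (use sum_bary[OF V] B in auto)
  finally show ?thesis .
qed

lemma sum_bary_coeff_scaleR: "(\<Sum>a\<in>V. bary_coeff V B c a *\<^sub>R a) = (\<Sum>b\<in>B. c b *\<^sub>R b)"
proof -
  have "(\<Sum>a\<in>V. bary_coeff V B c a *\<^sub>R a) = (\<Sum>b\<in>B. c b *\<^sub>R (\<Sum>a\<in>V. bary V b a *\<^sub>R a))"
    unfolding bary_coeff_def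
    by (simp add: scaleR_sum_left scaleR_sum_right sum.swap[of _ V] mult.commute)
  also have "\<dots> = (\<Sum>b\<in>B. c b *\<^sub>R b)"
    by (intro sum.cong refl) (use sum_bary_scaleR[OF V] B in auto)
  finally show ?thesis .
qed

end

lemma bary_coeff_outside_Lambda:
  assumes "V \<in> Lambda A D" "a \<notin> V"
  shows "bary_coeff V B c a = 0"
  using bary_coeff_outside[OF Lambda_memberD(2,3)[OF assms(1)]] Lambda_memberD(4)[OF assms(1)] assms(2)
  by simp

section \<open>Lower faces of regular subdivisions\<close>

definition lower_face :: "'a::real_inner set \<Rightarrow> ('a \<Rightarrow> real) \<Rightarrow> 'a \<Rightarrow> 'a set" where
  "lower_face A h w = {a\<in>A. \<forall>a'\<in>A. h a + w \<bullet> a \<le> h a' + w \<bullet> a'}"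

lemma reg_cells_eq: "reg_cells A h = {convex hull lower_face A h w | w. True}"
  unfolding reg_cells_def lower_face_def by simp

lemma lower_face_subset: "lower_face A h w \<subseteq> A"
  unfolding lower_face_def by blast

lemma reg_cells_convex: "C \<in> reg_cells A h \<Longrightarrow> convex C"
  unfolding reg_cells_def by auto

lemma lower_face_level:
  assumes "a0 \<in> lower_face A h w"
  shows "\<And>a. a \<in> lower_face A h w \<Longrightarrow> h a + w \<bullet> a = h a0 + w \<bullet> a0"
    and "\<And>a. a \<in> A \<Longrightarrow> h a0 + w \<bullet> a0 \<le> h a + w \<bullet> a"
  using assms unfolding lower_face_def by (auto intro: order_antisym)

lemma F_n_subset_lower_face:
  assumes "D \<in> F_n A"
  obtains w where "D \<subseteq> convex hull lower_face A h w"
proof -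
  obtain \<sigma> where \<sigma>: "\<forall>h. \<sigma> h \<in> reg_cells A h" "D = (\<Inter>h. \<sigma> h)"
    using assms unfolding F_n_def common_refinement_def by blast
  obtain w where "\<sigma> h = convex hull lower_face A h w"
    using \<sigma>(1) unfolding reg_cells_eq by blast
  moreover have "D \<subseteq> \<sigma> h"
    using \<sigma>(2) by blast
  ultimately show ?thesis
    using that by simp
qed

lemma F_n_affine_hull: "D \<in> F_n A \<Longrightarrow> affine hull D = UNIV"
  using aff_dim_eq_full[of D] unfolding F_n_def by simp

lemma F_n_interior_nonempty:
  assumes "D \<in> F_n A"
  shows "interior D \<noteq> {}"
proof -
  obtain \<sigma> where \<sigma>: "\<forall>h. \<sigma> h \<in> reg_cells A h" "D = (\<Inter>h. \<sigma> h)" and "D \<noteq> {}"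
    using assms unfolding F_n_def common_refinement_def by blast
  have "convex D"
    unfolding \<sigma>(2) using \<sigma>(1) reg_cells_convex by (intro convex_Inter) blast
  moreover have "affine hull D = UNIV"
    using assms by (rule F_n_affine_hull)
  ultimately show ?thesis
    using \<open>D \<noteq> {}\<close> rel_interior_interior[of D] rel_interior_eq_empty[of D] by simp
qed

lemma generic_point_in_interior:
  fixes A :: "'a::euclidean_space set"
  assumes "finite A" "interior D \<noteq> {}"
  obtains z where "z \<in> interior D" "\<And>T. T \<subseteq> A \<Longrightarrow> z \<in> convex hull T \<Longrightarrow> aff_dim T = DIM('a)"
proof -
  define Bad where "Bad = \<Union>((\<lambda>T. convex hull T) ` {T. T \<subseteq> A \<and> aff_dim T \<noteq> DIM('a)})"
  have "negligible (convex hull T)" if "aff_dim T \<noteq> DIM('a)" for T :: "'a set"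
  proof -
    have "interior (convex hull T) = {}"
      using that aff_dim_nonempty_interior[of "convex hull T"] by (auto simp: aff_dim_convex_hull)
    then show ?thesis
      by (simp add: negligible_convex_interior)
  qed
  then have "negligible Bad"
    unfolding Bad_def using assms(1) by (intro negligible_Union) auto
  then have "\<not> interior D \<subseteq> Bad"
    using assms(2) open_not_negligible[of "interior D"] negligible_subset[of Bad "interior D"] by auto
  then obtain z where "z \<in> interior D" "z \<notin> Bad"
    by blast
  moreover have "aff_dim T = DIM('a)" if "T \<subseteq> A" "z \<in> convex hull T" for T
    using \<open>z \<notin> Bad\<close> that unfolding Bad_def by blast
  ultimately show ?thesis
    using that by blast
qed

lemma generic_point_in_simplex:
  fixes F :: "'a::euclidean_space set"
  assumes "z \<in> convex hull F"
    and generic: "\<And>T. T \<subseteq> F \<Longrightarrow> z \<in> convex hull T \<Longrightarrow> aff_dim T = DIM('a)"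
  obtains S u where "S \<subseteq> F" "finite S" "card S = DIM('a) + 1" "\<not> affine_dependent S"
    "\<forall>v\<in>S. 0 < u v" "sum u S = 1" "(\<Sum>v\<in>S. u v *\<^sub>R v) = z"
proof -
  obtain S u where S: "finite S" "S \<subseteq> F" "card S \<le> aff_dim F + 1" "\<forall>v\<in>S. 0 \<le> u v"
      "sum u S = 1" "(\<Sum>v\<in>S. u v *\<^sub>R v) = z"
    using assms(1) unfolding convex_hull_caratheodory_aff_dim by blast
  have "z \<in> convex hull S"
    using S convex_hull_finite[OF S(1)] by blast
  then have affS: "aff_dim S = DIM('a)"
    using generic S(2) by blast
  have "aff_dim F \<le> DIM('a)"
    using aff_dim_le_DIM[of F] by simp
  moreover have "aff_dim S \<le> int (card S) - 1"
    using aff_dim_le_card[OF S(1)] by simp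
  ultimately have card: "card S = DIM('a) + 1"
    using S(3) affS by linarith
  then have indep: "\<not> affine_dependent S"
    using affine_independent_iff_card[of S] S(1) affS by simp
  have "0 < u v" if "v \<in> S" for v
  proof (rule ccontr)
    assume "\<not> 0 < u v"
    then have "u v = 0" using S(4) that by force
    then have "sum u (S - {v}) = 1" "(\<Sum>x\<in>S - {v}. u x *\<^sub>R x) = z"
      using S(1,5,6) that by (simp_all add: sum_diff1)
    then have "z \<in> convex hull (S - {v})"
      using convex_hull_finite[of "S - {v}"] S(1,4) by auto
    moreover have "aff_dim (S - {v}) \<le> int (card (S - {v})) - 1"
      using aff_dim_le_card[of "S - {v}"] S(1) by simp
    moreover have "S - {v} \<subseteq> F"
      using S(2) by blast
    ultimately show False
      using generic[of "S - {v}"] S(1) card that by (simp add: card_Diff_singleton)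
  qed
  then show ?thesis
    using that S(1,2,5,6) card indep by blast
qed

lemma inner_const_on_spanning_imp_zero:
  fixes w :: "'a::euclidean_space"
  assumes "affine hull S = UNIV" "\<forall>v\<in>S. w \<bullet> v = m"
  shows "w = 0"
proof -
  have "affine hull S \<subseteq> {q. w \<bullet> q = m}"
    using assms(2) by (intro hull_minimal) (auto simp: affine_hyperplane)
  then have "w \<bullet> q = m" for q
    using assms(1) by blast
  from this[of 0] this[of w] show ?thesis by simp
qed

lemma inner_eq_on_positive_combination:
  fixes w :: "'a::real_inner"
  assumes "finite S" "\<forall>v\<in>S. 0 < u v" "sum u S = 1" "(\<Sum>v\<in>S. u v *\<^sub>R v) = z"
    and "\<forall>v\<in>S. m \<le> w \<bullet> v" "w \<bullet> z \<le> m"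
  shows "\<forall>v\<in>S. w \<bullet> v = m"
proof -
  have "(\<Sum>v\<in>S. u v * (w \<bullet> v - m)) = (\<Sum>v\<in>S. u v * (w \<bullet> v)) - sum u S * m"
    by (simp add: right_diff_distrib sum_subtractf sum_distrib_right)
  also have "\<dots> = w \<bullet> z - m"
    unfolding assms(4)[symmetric] assms(3) by (simp add: inner_sum_right)
  finally have "(\<Sum>v\<in>S. u v * (w \<bullet> v - m)) \<le> 0"
    using assms(6) by simp
  moreover have nonneg: "\<And>v. v \<in> S \<Longrightarrow> 0 \<le> u v * (w \<bullet> v - m)"
    using assms(2,5) by (simp add: less_imp_le)
  ultimately have "(\<Sum>v\<in>S. u v * (w \<bullet> v - m)) = 0"
    using sum_nonneg[of S "\<lambda>v. u v * (w \<bullet> v - m)"] by (meson order_antisym)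
  then have "\<forall>v\<in>S. u v * (w \<bullet> v - m) = 0"
    using sum_nonneg_eq_0_iff[OF assms(1), of "\<lambda>v. u v * (w \<bullet> v - m)"] nonneg by blast
  then show ?thesis
    using assms(2) by fastforce
qed

lemma lower_face_subset_simplex:
  fixes A S :: "'a::euclidean_space set"
  assumes "S \<subseteq> A" "finite S" "affine hull S = UNIV"
    and u: "\<forall>v\<in>S. 0 < u v" "sum u S = 1" "(\<Sum>v\<in>S. u v *\<^sub>R v) = z"
    and z: "z \<in> convex hull lower_face A h w"
    and h: "\<forall>a\<in>S. h a = 0" "\<forall>a\<in>A - S. 0 < h a"
  shows "lower_face A h w \<subseteq> S"
proof -
  obtain a0 where a0: "a0 \<in> lower_face A h w"
    using z by fastforce
  define m where "m = h a0 + w \<bullet> a0"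
  have "w \<bullet> a \<le> m" if "a \<in> lower_face A h w" for a
  proof -
    have "a \<in> A"
      using that lower_face_subset by blast
    then have "0 \<le> h a"
      using h by (cases "a \<in> S") (auto simp: less_imp_le)
    then show ?thesis
      using lower_face_level(1)[OF a0 that] unfolding m_def by simp
  qed
  then have "convex hull lower_face A h w \<subseteq> {x. w \<bullet> x \<le> m}"
    by (intro hull_minimal) (auto simp: convex_halfspace_le)
  then have "w \<bullet> z \<le> m"
    using z by blast
  have "\<forall>v\<in>S. m \<le> w \<bullet> v"
    using lower_face_level(2)[OF a0] assms(1) h(1) unfolding m_def by force
  then have on_S: "\<forall>v\<in>S. w \<bullet> v = m"
    using \<open>w \<bullet> z \<le> m\<close> by (rule inner_eq_on_positive_combination[OF assms(2) u])
  then have "w = 0"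
    by (rule inner_const_on_spanning_imp_zero[OF assms(3)])
  moreover obtain v where "v \<in> S"
    using u(2) by fastforce
  ultimately have "m = 0"
    using on_S by (metis inner_zero_left)
  show ?thesis
  proof
    fix a
    assume a: "a \<in> lower_face A h w"
    then have "h a = 0"
      using lower_face_level(1)[OF a0 a] \<open>w = 0\<close> \<open>m = 0\<close> unfolding m_def by simp
    then show "a \<in> S"
      using h(2) a lower_face_subset by force
  qed
qed

lemma Lambda_memI:
  fixes A D S :: "(real^'n) set"
  assumes "D \<in> F_n A" "S \<subseteq> A" "finite S" "card S = CARD('n) + 1" "\<not> affine_dependent S"
    and u: "\<forall>v\<in>S. 0 < u v" "sum u S = 1" "(\<Sum>v\<in>S. u v *\<^sub>R v) \<in> D"
  shows "S \<in> Lambda A D"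
proof -
  have "aff_dim S = CARD('n)"
    using assms(3-5) affine_independent_iff_card[of S] by simp
  then have S: "affine hull S = UNIV"
    using aff_dim_eq_full[of S] by simp
  \<comment> \<open>The regular subdivision lifting exactly the points outside \<open>S\<close> has \<open>conv S\<close> as a cell.\<close>
  define hS where "hS a = (if a \<in> S then 0 else 1::real)" for a
  obtain w where D_S: "D \<subseteq> convex hull lower_face A hS w"
    using F_n_subset_lower_face[OF assms(1)] .
  have "lower_face A hS w \<subseteq> S"
    by (rule lower_face_subset_simplex[OF assms(2,3) S u(1,2) refl])
      (use D_S u(3) in \<open>auto simp: hS_def\<close>)
  then have "D \<subseteq> convex hull S"
    using D_S hull_mono by blast
  then have "interior D \<subseteq> interior (convex hull S)"
    by (rule interior_mono)
  moreover have "rel_interior D = interior D"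
    using F_n_affine_hull[OF assms(1)] by (rule rel_interior_interior)
  moreover have "rel_interior (convex hull S) = interior (convex hull S)"
    using S by (intro rel_interior_interior) simp
  ultimately have "rel_interior D \<subseteq> rel_interior (convex hull S)"
    by simp
  then show ?thesis
    unfolding Lambda_def using assms(2,4,5) by simp
qed

lemma exists_Lambda_lower_simplex:
  fixes A D :: "(real^'n) set" and y :: "real^'n \<Rightarrow> real"
  assumes "finite A" "D \<in> F_n A"
  obtains V w m where "V \<in> Lambda A D" "\<forall>v\<in>V. y v + w \<bullet> v = m" "\<forall>a\<in>A. m \<le> y a + w \<bullet> a"
proof -
  obtain w where D_y: "D \<subseteq> convex hull lower_face A y w"
    using F_n_subset_lower_face[OF assms(2)] .
  obtain z where z: "z \<in> interior D"
    and generic: "\<And>T. T \<subseteq> A \<Longrightarrow> z \<in> convex hull T \<Longrightarrow> aff_dim T = DIM(real^'n)"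
    using generic_point_in_interior[OF assms(1) F_n_interior_nonempty[OF assms(2)]] by blast
  have "z \<in> D"
    using z interior_subset by blast
  moreover have "\<And>T. T \<subseteq> lower_face A y w \<Longrightarrow> z \<in> convex hull T \<Longrightarrow> aff_dim T = DIM(real^'n)"
    using generic lower_face_subset by blast
  ultimately obtain S u where S: "S \<subseteq> lower_face A y w" "finite S" "card S = DIM(real^'n) + 1"
      "\<not> affine_dependent S"
    and u: "\<forall>v\<in>S. 0 < u v" "sum u S = 1" "(\<Sum>v\<in>S. u v *\<^sub>R v) = z"
    using generic_point_in_simplex[of z "lower_face A y w"] D_y by blast
  have "S \<subseteq> A"
    using S(1) lower_face_subset by blast
  then have "S \<in> Lambda A D"
    using Lambda_memI[OF assms(2) _ S(2) _ S(4) u(1,2)] S(3) u(3) \<open>z \<in> D\<close> by simp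
  moreover obtain v0 where "v0 \<in> S"
    using u(2) by fastforce
  ultimately show ?thesis
    using that[of S w "y v0 + w \<bullet> v0"] lower_face_level[of v0 A y w] S(1) \<open>S \<subseteq> A\<close> by blast
qed

lemma bary_coeff_cone:
  fixes Ap Am D :: "(real^'n) set" and c :: "real^'n \<Rightarrow> real"
  assumes "finite Ap" "D \<in> F_n Ap" "\<forall>a\<in>Ap. 0 \<le> c a"
    and sum_eq: "sum c Ap = sum c Am" and moment_eq: "(\<Sum>a\<in>Ap. c a *\<^sub>R a) = (\<Sum>b\<in>Am. c b *\<^sub>R b)"
  shows "in_finite_cone Ap (Lambda Ap D) (\<lambda>V. bary_coeff V Am c) c"
proof (rule ccontr)
  assume "\<not> ?thesis"
  then obtain y where y: "\<forall>V\<in>Lambda Ap D. 0 \<le> dot_on Ap y (bary_coeff V Am c)" "dot_on Ap y c < 0"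
    using farkas_lemma[OF assms(1) finite_Lambda[OF assms(1)]] by blast
  \<comment> \<open>Read \<open>y\<close> as heights on \<open>Ap\<close>: a simplex of \<open>Lambda Ap D\<close> on a lower face of the lifting
    refutes the separation.\<close>
  obtain V w m where V: "V \<in> Lambda Ap D" "\<forall>v\<in>V. y v + w \<bullet> v = m" "\<forall>a\<in>Ap. m \<le> y a + w \<bullet> a"
    using exists_Lambda_lower_simplex[OF assms(1,2)] by blast
  note simplex = Lambda_memberD[OF V(1)]
  have Am: "Am \<subseteq> affine hull V"
    using simplex(4) by simp
  have "dot_on Ap y (bary_coeff V Am c) = (\<Sum>a\<in>V. bary_coeff V Am c a * (m - w \<bullet> a))"
    unfolding dot_on_def using simplex(1) V(2) bary_coeff_outside_Lambda[OF V(1)]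
    by (intro sum.mono_neutral_cong_right assms(1)) (auto simp: algebra_simps)
  also have "\<dots> = m * sum c Am - w \<bullet> (\<Sum>b\<in>Am. c b *\<^sub>R b)"
    unfolding sum_mult_affine sum_bary_coeff[OF simplex(2,3) Am] sum_bary_coeff_scaleR[OF simplex(2,3) Am] ..
  also have "\<dots> = (\<Sum>a\<in>Ap. c a * (m - w \<bullet> a))"
    unfolding sum_mult_affine sum_eq moment_eq ..
  also have "\<dots> \<le> dot_on Ap y c"
  proof -
    have "c a * (m - w \<bullet> a) \<le> y a * c a" if "a \<in> Ap" for a
    proof -
      have "m - w \<bullet> a \<le> y a"
        using V(3) that by force
      then show ?thesis
        using mult_left_mono[of "m - w \<bullet> a" "y a" "c a"] assms(3) that by (simp add: mult.commute)
    qed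
    then show ?thesis
      unfolding dot_on_def by (rule sum_mono)
  qed
  finally show False
    using y V(1) by fastforce
qed

lemma Zset_nonneg_nonempty_of_cone:
  fixes Ap Am D :: "(real^'n) set" and c :: "real^'n \<Rightarrow> real"
  assumes "finite Ap" "in_finite_cone Ap (Lambda Ap D) (\<lambda>V. bary_coeff V Am c) c"
  shows "Zset Ap Am (Lambda Ap D) c \<inter> {\<delta>. \<forall>V\<in>Lambda Ap D. \<delta> V \<ge> 0} \<noteq> {}"
proof -
  let ?L = "Lambda Ap D"
  obtain l where l: "\<forall>V\<in>?L. 0 \<le> l V" "\<forall>a\<in>Ap. c a = (\<Sum>V\<in>?L. l V * bary_coeff V Am c a)"
    using assms(2) unfolding in_finite_cone_def by blast
  define \<delta> where "\<delta> V = (if V \<in> ?L then l V else 0)" for V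
  have "(\<Sum>V\<in>{V\<in>?L. a \<in> V}. \<delta> V * (\<Sum>b\<in>Am. bary V b a * c b)) = c a" if "a \<in> Ap" for a
  proof -
    have "(\<Sum>V\<in>{V\<in>?L. a \<in> V}. \<delta> V * bary_coeff V Am c a) = (\<Sum>V\<in>?L. l V * bary_coeff V Am c a)"
      using finite_Lambda[OF assms(1)]
      by (intro sum.mono_neutral_cong_left) (auto simp: \<delta>_def bary_coeff_outside_Lambda[of _ Ap D])
    then show ?thesis
      using l(2) that unfolding bary_coeff_def by simp
  qed
  then have "\<delta> \<in> Zset Ap Am ?L c"
    unfolding Zset_def by (auto simp: \<delta>_def)
  moreover have "\<forall>V\<in>?L. 0 \<le> \<delta> V"
    using l(1) by (simp add: \<delta>_def)
  ultimately show ?thesis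
    by blast
qed

theorem lemma3p13:
  fixes Ap Am D :: "(real^'n) set" and c :: "real^'n \<Rightarrow> real"
  assumes "finite Ap" and "finite Am" and "Ap \<inter> Am = {}"
    and "aff_dim (convex hull (Ap \<union> Am)) = int CARD('n)"
    and "nonseparable Ap Am"
    and "D \<in> F_n Ap" and "Am \<subseteq> D"
    and "\<forall>a\<in>Ap \<union> Am. c a > 0"
    and "(1::real^'n) \<in> Sing_pos (signomial Ap Am c)"
  shows "Zset Ap Am (Lambda Ap D) c \<inter> {\<delta>. \<forall>V\<in>Lambda Ap D. \<delta> V \<ge> 0} \<noteq> {}"
proof -
  have "\<forall>a\<in>Ap. 0 \<le> c a"
    using assms(8) by (simp add: less_imp_le)
  then have "in_finite_cone Ap (Lambda Ap D) (\<lambda>V. bary_coeff V Am c) c"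
    using bary_coeff_cone[OF assms(1,6)] one_in_Sing_pos_signomial_sum_eq[OF assms(9)]
      one_in_Sing_pos_signomial_moment_eq[OF assms(9)]
    by blast
  then show ?thesis
    by (rule Zset_nonneg_nonempty_of_cone[OF assms(1)])
qed

end
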